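(* Let $r_1,r_2,r_3$ be pairwise distinct odd positive integers such that for every $i\in[3]$, $r_i\notin\{1,\lfloor (r_1+r_2+r_3)/2\rfloor,\lceil (r_1+r_2+r_3)/2\rceil\}$. Let $G=K_{r_1,r_2,r_3}$ be the complete 3-partite graph with part sizes $r_1,r_2,r_3$. Then for every bisection $H$ of $G$ there exists a vertex $v\in V(G)$ with $d_H(v)<(d_G(v)-1)/2$.
   Context: A bisection of a graph $G$ is a bipartite spanning subgraph $H$ of $G$ with a bipartition into two partition sets (every edge of $H$ joining the two sets) whose sizes differ by at most one. $d_G(v)$ denotes the degree of $v$ in $G$. *)

theory Defs
  imports Complex_Main
begin

text \<open>Complete multipartite graph with part sizes rs!0, rs!1, ...:
  vertex (i,j) is the j-th vertex of part i.\<close>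
definition cmp_vertices :: "nat list \<Rightarrow> (nat \<times> nat) set" where
  "cmp_vertices rs = {(i, j). i < length rs \<and> j < rs ! i}"

definition cmp_edges :: "nat list \<Rightarrow> (nat \<times> nat) set set" where
  "cmp_edges rs = {{u, v} | u v. u \<in> cmp_vertices rs \<and> v \<in> cmp_vertices rs \<and> fst u \<noteq> fst v}"

definition degree :: "'a set set \<Rightarrow> 'a \<Rightarrow> nat" where
  "degree E v = card {u. {u, v} \<in> E}"

definition is_bisection :: "'a set \<Rightarrow> 'a set set \<Rightarrow> 'a set set \<Rightarrow> bool" where
  "is_bisection V E H \<longleftrightarrow> H \<subseteq> E \<and>
     (\<exists>A B. A \<union> B = V \<and> A \<inter> B = {} \<and>
        (\<forall>e\<in>H. \<exists>a\<in>A. \<exists>b\<in>B. e = {a, b}) \<and>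
        \<bar>int (card A) - int (card B)\<bar> \<le> 1)"

end

theory Submission imports Defs begin

text \<open>Let \<open>A, B\<close> be the sides of the bisection, \<open>d = |A| - |B| = \<plusminus>1\<close>, and let part \<open>i\<close>
  contribute \<open>a\<^sub>i\<close> vertices to \<open>A\<close> and \<open>b\<^sub>i\<close> to \<open>B\<close>. A vertex of \<open>A\<close> in part \<open>i\<close> has
  \<open>H\<close>-degree at most \<open>|B| - b\<^sub>i\<close> and \<open>G\<close>-degree \<open>|A| + |B| - r\<^sub>i\<close>, so if no vertex is deficient then
  \<open>a\<^sub>i - b\<^sub>i \<ge> d - 1\<close> whenever \<open>a\<^sub>i > 0\<close>, and symmetrically \<open>a\<^sub>i - b\<^sub>i \<le> d + 1\<close> whenever
  \<open>b\<^sub>i > 0\<close>. As \<open>r\<^sub>i\<close> is odd, \<open>a\<^sub>i - b\<^sub>i\<close> is \<open>d\<close>, \<open>r\<^sub>i\<close> or \<open>-r\<^sub>i\<close>. These three differences sum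
  to \<open>d\<close>, and every choice of signs is ruled out by the hypotheses on the \<open>r\<^sub>i\<close>.\<close>

definition cmp_part :: "nat list \<Rightarrow> nat \<Rightarrow> (nat \<times> nat) set" where
  "cmp_part rs i = {v \<in> cmp_vertices rs. fst v = i}"

lemma cmp_part_subset: "cmp_part rs i \<subseteq> cmp_vertices rs"
  by (auto simp: cmp_part_def)

lemma cmp_part_eq: "i < length rs \<Longrightarrow> cmp_part rs i = Pair i ` {..<rs ! i}"
  by (auto simp: cmp_part_def cmp_vertices_def)

lemma card_cmp_part: "i < length rs \<Longrightarrow> card (cmp_part rs i) = rs ! i"
  by (simp add: cmp_part_eq card_image inj_on_def)

lemma cmp_vertices_eq_UN_cmp_part: "cmp_vertices rs = (\<Union>i<length rs. cmp_part rs i)"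
  by (auto simp: cmp_part_def cmp_vertices_def)

lemma finite_cmp_vertices: "finite (cmp_vertices rs)"
  by (simp add: cmp_vertices_eq_UN_cmp_part cmp_part_eq)

lemma card_eq_sum_card_Int_cmp_part:
  assumes "S \<subseteq> cmp_vertices rs"
  shows "card S = (\<Sum>i<length rs. card (S \<inter> cmp_part rs i))"
proof -
  have "S = (\<Union>i<length rs. S \<inter> cmp_part rs i)"
    using assms by (auto simp: cmp_vertices_eq_UN_cmp_part)
  also have "card \<dots> = (\<Sum>i<length rs. card (S \<inter> cmp_part rs i))"
    by (rule card_UN_disjoint) (auto simp: cmp_part_def finite_cmp_vertices)
  finally show ?thesis .
qed

lemma card_cmp_vertices: "card (cmp_vertices rs) = sum_list rs"
proof -
  have "card (cmp_vertices rs) = (\<Sum>i<length rs. card (cmp_part rs i))"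
    using card_eq_sum_card_Int_cmp_part[of "cmp_vertices rs" rs]
    by (simp add: Int_absorb1 cmp_part_subset)
  also have "\<dots> = (\<Sum>i<length rs. rs ! i)"
    by (rule sum.cong) (simp_all add: card_cmp_part)
  finally show ?thesis by (simp add: sum_list_sum_nth atLeast0LessThan)
qed

lemma card_cmp_vertices_partition:
  assumes "A \<union> B = cmp_vertices rs" "A \<inter> B = {}"
  shows "card A + card B = sum_list rs"
  using assms card_Un_disjoint[of A B] finite_cmp_vertices[of rs]
  by (metis card_cmp_vertices finite_Un)

lemma card_cmp_part_partition:
  assumes "A \<union> B = cmp_vertices rs" "A \<inter> B = {}" "i < length rs"
  shows "card (A \<inter> cmp_part rs i) + card (B \<inter> cmp_part rs i) = rs ! i"
proof -
  have fin: "finite (cmp_part rs i)"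
    using finite_subset[OF cmp_part_subset finite_cmp_vertices] .
  have "cmp_part rs i = A \<inter> cmp_part rs i \<union> B \<inter> cmp_part rs i"
    using assms(1) cmp_part_subset by blast
  then have "card (cmp_part rs i) = card (A \<inter> cmp_part rs i) + card (B \<inter> cmp_part rs i)"
    using fin assms(2) by (metis card_Un_disjoint finite_Int Int_Un_distrib2 inf_commute Int_empty_left
        Int_assoc)
  then show ?thesis using card_cmp_part[OF assms(3)] by simp
qed

lemma mem_cmp_edges_iff:
  "{u, v} \<in> cmp_edges rs \<longleftrightarrow> u \<in> cmp_vertices rs \<and> v \<in> cmp_vertices rs \<and> fst u \<noteq> fst v"
  unfolding cmp_edges_def doubleton_eq_iff mem_Collect_eq by auto (metis prod.collapse)

lemma cmp_neighbours:
  assumes "v \<in> cmp_vertices rs"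
  shows "{u. {u, v} \<in> cmp_edges rs} = cmp_vertices rs - cmp_part rs (fst v)"
  using assms by (auto simp: mem_cmp_edges_iff cmp_part_def)

lemma degree_cmp_edges:
  assumes "v \<in> cmp_vertices rs"
  shows "degree (cmp_edges rs) v = sum_list rs - rs ! fst v"
proof -
  have "fst v < length rs" using assms by (simp add: cmp_vertices_def case_prod_beta)
  then show ?thesis
    using assms by (simp add: degree_def cmp_neighbours card_Diff_subset cmp_part_subset
        finite_subset[OF cmp_part_subset finite_cmp_vertices] card_cmp_vertices card_cmp_part)
qed

lemma degree_le_card_other_side:
  assumes "H \<subseteq> cmp_edges rs" "A \<inter> B = {}" "finite B"
    and "\<forall>e\<in>H. \<exists>a\<in>A. \<exists>b\<in>B. e = {a, b}" and "v \<in> A"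
  shows "degree H v \<le> card (B - cmp_part rs (fst v))"
  unfolding degree_def
proof (rule card_mono)
  show "finite (B - cmp_part rs (fst v))" using assms(3) by simp
  show "{u. {u, v} \<in> H} \<subseteq> B - cmp_part rs (fst v)"
  proof
    fix u assume "u \<in> {u. {u, v} \<in> H}"
    then have uv: "{u, v} \<in> H" by simp
    then have "fst u \<noteq> fst v"
      using assms(1) mem_cmp_edges_iff by blast
    moreover have "u \<in> B"
      using assms(2,4,5) uv \<open>fst u \<noteq> fst v\<close> by (fastforce simp: doubleton_eq_iff)
    ultimately show "u \<in> B - cmp_part rs (fst v)" by (simp add: cmp_part_def)
  qed
qed

lemma bisection_side_part_bound:
  assumes H: "H \<subseteq> cmp_edges rs"
    and AB: "A \<union> B = cmp_vertices rs" "A \<inter> B = {}"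
    and joins: "\<forall>e\<in>H. \<exists>a\<in>A. \<exists>b\<in>B. e = {a, b}"
    and v: "v \<in> A" "fst v = i"
    and deg: "degree (cmp_edges rs) v \<le> 2 * degree H v + 1"
  shows "int (card A) - int (card (A \<inter> cmp_part rs i))
           \<le> int (card B) - int (card (B \<inter> cmp_part rs i)) + 1"
proof -
  let ?P = "cmp_part rs i"
  have finA: "finite A" and finB: "finite B"
    using AB(1) finite_cmp_vertices finite_subset by (metis Un_upper1 Un_upper2)+
  have vV: "v \<in> cmp_vertices rs" using AB(1) v(1) by blast
  have i: "i < length rs" using vV v(2) by (auto simp: cmp_vertices_def)
  let ?a = "card (A \<inter> ?P)" and ?b = "card (B \<inter> ?P)"
  have a_le: "?a \<le> card A" and b_le: "?b \<le> card B"
    using finA finB by (simp_all add: card_mono)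
  have "sum_list rs = card A + card B"
    using card_cmp_vertices_partition[OF AB] by simp
  moreover have "rs ! i = ?a + ?b"
    using card_cmp_part_partition[OF AB i] by simp
  ultimately have "int (degree (cmp_edges rs) v) = int (card A) + int (card B) - int ?a - int ?b"
    using degree_cmp_edges[OF vV] v(2) a_le b_le by (simp add: of_nat_diff)
  moreover have "int (degree H v) \<le> int (card B) - int ?b"
    using degree_le_card_other_side[OF H AB(2) finB joins v(1)] v(2) finB b_le
    by (simp add: card_Diff_subset_Int Diff_Int2 of_nat_diff)
  moreover have "int (degree (cmp_edges rs) v) \<le> 2 * int (degree H v) + 1"
    using deg by linarith
  ultimately show ?thesis by linarith
qed

lemma odd_split_diff_cases:
  fixes a b r d :: int
  assumes "odd r" "a + b = r" "a \<ge> 0" "b \<ge> 0" "d = 1 \<or> d = -1"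
    and "a > 0 \<Longrightarrow> a - b \<ge> d - 1" "b > 0 \<Longrightarrow> a - b \<le> d + 1"
  shows "a - b \<in> {d, r, -r}"
proof (cases "a > 0 \<and> b > 0")
  case True
  then have "d - 1 \<le> a - b" "a - b \<le> d + 1" using assms by auto
  moreover have "odd (a - b)" using assms(1,2) by (metis add_diff_cancel_right' even_add even_diff)
  ultimately have "a - b = d" using assms(5) by presburger
  then show ?thesis by simp
next
  case False
  then show ?thesis using assms by auto
qed

lemma bisection_part_diff_cases:
  assumes H: "H \<subseteq> cmp_edges rs"
    and AB: "A \<union> B = cmp_vertices rs" "A \<inter> B = {}"
    and joins: "\<forall>e\<in>H. \<exists>a\<in>A. \<exists>b\<in>B. e = {a, b}"
    and deg: "\<forall>v\<in>cmp_vertices rs. degree (cmp_edges rs) v \<le> 2 * degree H v + 1"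
    and d: "int (card A) - int (card B) = d" "d = 1 \<or> d = -1"
    and i: "i < length rs" "odd (rs ! i)"
  shows "int (card (A \<inter> cmp_part rs i)) - int (card (B \<inter> cmp_part rs i))
           \<in> {d, int (rs ! i), - int (rs ! i)}"
proof (rule odd_split_diff_cases)
  let ?a = "card (A \<inter> cmp_part rs i)" and ?b = "card (B \<inter> cmp_part rs i)"
  have BA: "B \<union> A = cmp_vertices rs" "B \<inter> A = {}" using AB by blast+
  have joins': "\<forall>e\<in>H. \<exists>b\<in>B. \<exists>a\<in>A. e = {b, a}" using joins by (metis insert_commute)
  show "int ?a + int ?b = int (rs ! i)"
    using card_cmp_part_partition[OF AB i(1)] by simp
  show "int ?a - int ?b \<ge> d - 1" if "int ?a > 0"
  proof -
    have "A \<inter> cmp_part rs i \<noteq> {}" using that by auto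
    then obtain v where v: "v \<in> A" "fst v = i" by (auto simp: cmp_part_def)
    then have "v \<in> cmp_vertices rs" using AB(1) by blast
    with bisection_side_part_bound[OF H AB joins v] deg d(1) show ?thesis by simp
  qed
  show "int ?a - int ?b \<le> d + 1" if "int ?b > 0"
  proof -
    have "B \<inter> cmp_part rs i \<noteq> {}" using that by auto
    then obtain v where v: "v \<in> B" "fst v = i" by (auto simp: cmp_part_def)
    then have "v \<in> cmp_vertices rs" using AB(1) by blast
    with bisection_side_part_bound[OF H BA joins' v] deg d(1) show ?thesis by simp
  qed
qed (use i d in simp_all)

lemma signed_odd_parts_sum:
  fixes r1 r2 r3 :: nat and x1 x2 x3 d :: int
  assumes "x1 \<in> {d, int r1, - int r1}" "x2 \<in> {d, int r2, - int r2}" "x3 \<in> {d, int r3, - int r3}"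
    and "x1 + x2 + x3 = d" "d = 1 \<or> d = -1"
    and "r1 > 0" "r2 > 0" "r3 > 0" "r1 \<noteq> r2" "r1 \<noteq> r3" "r2 \<noteq> r3"
    and "\<forall>r\<in>{r1, r2, r3}. r \<notin> {1, (r1 + r2 + r3) div 2, (r1 + r2 + r3 + 1) div 2}"
  shows False
proof -
  have excluded: "int r \<noteq> 1 \<and> 2 * int r \<noteq> int r1 + int r2 + int r3 - 1
      \<and> 2 * int r \<noteq> int r1 + int r2 + int r3 + 1"
    if "r \<in> {r1, r2, r3}" for r
  proof -
    have "r \<noteq> 1 \<and> r1 + r2 + r3 \<noteq> 2 * r + 1 \<and> r1 + r2 + r3 + 1 \<noteq> 2 * r"
      using assms(12) that by fastforce
    then show ?thesis by linarith
  qed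
  have "int r1 > 0" "int r2 > 0" "int r3 > 0"
    and "int r1 \<noteq> int r2" "int r1 \<noteq> int r3" "int r2 \<noteq> int r3"
    using assms(6-11) by simp_all
  \<comment> \<open>Three \<open>d\<close>'s sum to \<open>3d\<close>; two force the third to be \<open>-d\<close>, i.e. \<open>r\<^sub>i = 1\<close>; one forces
    \<open>\<plusminus>r\<^sub>j \<plusminus> r\<^sub>k = 0\<close>; none forces \<open>2r\<^sub>i = r\<^sub>1 + r\<^sub>2 + r\<^sub>3 \<plusminus> 1\<close> or \<open>r\<^sub>1 + r\<^sub>2 + r\<^sub>3 = 1\<close>.\<close>
  then show False
    using excluded[of r1] excluded[of r2] excluded[of r3] assms(1-5)
    by (simp only: insert_iff empty_iff simp_thms True_implies_equals) smt
qed

theorem proposition1p2: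
  fixes r1 r2 r3 :: nat and H :: "(nat \<times> nat) set set"
  assumes "odd r1" "odd r2" "odd r3"
    and "r1 > 0" "r2 > 0" "r3 > 0"
    and "r1 \<noteq> r2" "r1 \<noteq> r3" "r2 \<noteq> r3"
    and "\<forall>r\<in>{r1, r2, r3}. r \<notin> {1, (r1 + r2 + r3) div 2, (r1 + r2 + r3 + 1) div 2}"
    and "is_bisection (cmp_vertices [r1, r2, r3]) (cmp_edges [r1, r2, r3]) H"
  shows "\<exists>v\<in>cmp_vertices [r1, r2, r3].
           real (degree H v) < (real (degree (cmp_edges [r1, r2, r3]) v) - 1) / 2"
proof (rule ccontr)
  let ?rs = "[r1, r2, r3]"
  assume "\<not> ?thesis"
  then have deg: "\<forall>v\<in>cmp_vertices ?rs. degree (cmp_edges ?rs) v \<le> 2 * degree H v + 1"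
    by (fastforce simp: not_less)
  obtain A B where H: "H \<subseteq> cmp_edges ?rs" and AB: "A \<union> B = cmp_vertices ?rs" "A \<inter> B = {}"
    and joins: "\<forall>e\<in>H. \<exists>a\<in>A. \<exists>b\<in>B. e = {a, b}"
    and balanced: "\<bar>int (card A) - int (card B)\<bar> \<le> 1"
    using assms(11) unfolding is_bisection_def by blast
  define d where "d = int (card A) - int (card B)"
  have "card A + card B = r1 + r2 + r3"
    using card_cmp_vertices_partition[OF AB] by simp
  then have d: "d = 1 \<or> d = -1"
    using balanced assms(1-3) unfolding d_def by presburger
  define x where "x i = int (card (A \<inter> cmp_part ?rs i)) - int (card (B \<inter> cmp_part ?rs i))" for i
  have x: "x i \<in> {d, int (?rs ! i), - int (?rs ! i)}" if "i < 3" "odd (?rs ! i)" for i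
    using bisection_part_diff_cases[OF H AB joins deg d_def[symmetric] d] that
    unfolding x_def by simp
  have "x 0 + x 1 + x 2 = d"
  proof -
    have "A \<subseteq> cmp_vertices ?rs" "B \<subseteq> cmp_vertices ?rs" using AB(1) by blast+
    then show ?thesis
      using card_eq_sum_card_Int_cmp_part[of A ?rs] card_eq_sum_card_Int_cmp_part[of B ?rs]
      unfolding x_def d_def by (simp add: numeral_3_eq_3 numeral_2_eq_2)
  qed
  moreover have "x 0 \<in> {d, int r1, - int r1}" "x 1 \<in> {d, int r2, - int r2}"
    "x 2 \<in> {d, int r3, - int r3}"
    using x[of 0] x[of 1] x[of 2] assms(1-3) by simp_all
  ultimately show False
    using signed_odd_parts_sum d assms(4-10) by blast
qed

end
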